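(* Let $G$ be a connected planar trivalent graph. Then $T_G(1)$ equals the number of Tait colorings of $G$, where $$T_G(z)=\sum_{M}\langle G:M\rangle_2(z),$$ the sum being over all perfect matchings $M$ of $G$.
   Context: Graphs are finite and may have multiple edges; trivalent means every vertex has degree $3$. A Tait coloring of $G$ is an assignment of one of three fixed colors to each edge so that the three edges at every vertex receive three distinct colors. The $2$-factor polynomial $\langle G:M\rangle_2(z)\in\mathbb{Z}[z,z^{-1}]$ of $G$ with perfect matching $M$ is defined as follows. Embed $G$ in the $2$-sphere. For a matching edge $e=uv$, let $\alpha,\beta$ be the other two edge-ends at $u$ and $\gamma,\delta$ the other two at $v$, labelled so that in a small disk around $e$ they appear in cyclic order $\alpha,\beta,\delta,\gamma$. The $0$-resolution at $e$ deletes $e,u,v$ and joins $\alpha$ to $\gamma$ and $\beta$ to $\delta$ by disjoint arcs; the $1$-resolution joins $\alpha$ to $\delta$ and $\beta$ to $\gamma$ by two arcs crossing once. For a state $s:M\to\{0,1\}$, resolving every matching edge accordingly yields $c(s)$ immersed closed curves, and $\langle G:M\rangle_2(z)=\sum_s(-z)^{|s|}(z+z^{-1})^{c(s)}$, where $|s|$ is the number of edges assigned $1$. This is independent of the chosen embedding. *)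

theory Defs
  imports Complex_Main
begin

text \<open>A trivalent multigraph together with an embedding in an orientable surface is
encoded as a combinatorial map: a finite set of darts (edge-ends) D, a fixed-point-free
involution alpha sending a dart to the other end of its edge, and a permutation sigma
whose orbits are the vertices and which gives the cyclic (counterclockwise) order of
edge-ends around each vertex.\<close>

definition trivalent_map :: "'d set \<Rightarrow> ('d \<Rightarrow> 'd) \<Rightarrow> ('d \<Rightarrow> 'd) \<Rightarrow> bool" where
  "trivalent_map D alpha sigma \<longleftrightarrow> finite D \<and> bij_betw alpha D D \<and> bij_betw sigma D D \<and>
     (\<forall>x\<in>D. alpha (alpha x) = x \<and> alpha x \<noteq> x \<and>
             sigma x \<noteq> x \<and> sigma (sigma x) \<noteq> x \<and> sigma (sigma (sigma x)) = x)"

definition map_orbits :: "('d \<Rightarrow> 'd) \<Rightarrow> 'd set \<Rightarrow> 'd set set" where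
  "map_orbits f D = D // {(x, y). x \<in> D \<and> (\<exists>n. (f ^^ n) x = y)}"

definition connected_map :: "'d set \<Rightarrow> ('d \<Rightarrow> 'd) \<Rightarrow> ('d \<Rightarrow> 'd) \<Rightarrow> bool" where
  "connected_map D alpha sigma \<longleftrightarrow>
     (\<forall>x\<in>D. \<forall>y\<in>D. (x, y) \<in> ({(a, alpha a) | a. a \<in> D} \<union> {(a, sigma a) | a. a \<in> D})\<^sup>*)"

text \<open>Genus 0 (embedding in the sphere) for a connected map: Euler's formula V - E + F = 2,
faces being the orbits of sigma o alpha.\<close>
definition planar_map :: "'d set \<Rightarrow> ('d \<Rightarrow> 'd) \<Rightarrow> ('d \<Rightarrow> 'd) \<Rightarrow> bool" where
  "planar_map D alpha sigma \<longleftrightarrow>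
     int (card (map_orbits sigma D)) - int (card D div 2) + int (card (map_orbits (sigma \<circ> alpha) D)) = 2"

definition perfect_matching :: "'d set \<Rightarrow> ('d \<Rightarrow> 'd) \<Rightarrow> ('d \<Rightarrow> 'd) \<Rightarrow> 'd set \<Rightarrow> bool" where
  "perfect_matching D alpha sigma M \<longleftrightarrow> M \<subseteq> D \<and> (\<forall>x\<in>M. alpha x \<in> M) \<and>
     (\<forall>x\<in>D. card ({x, sigma x, sigma (sigma x)} \<inter> M) = 1)"

text \<open>Partner of a non-matching dart x under the resolution of the matching edge at its
vertex; S is the set of darts of matching edges in state 1.  For a matching dart d at u
with alpha d at v, the ends alpha = sigma d, beta = sigma^2 d, delta = sigma (alpha d),
gamma = sigma^2 (alpha d) appear in cyclic order alpha, beta, delta, gamma around the edge.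
The 0-resolution joins alpha-gamma, beta-delta; the 1-resolution joins alpha-delta, beta-gamma.\<close>
definition res_partner :: "('d \<Rightarrow> 'd) \<Rightarrow> ('d \<Rightarrow> 'd) \<Rightarrow> 'd set \<Rightarrow> 'd set \<Rightarrow> 'd \<Rightarrow> 'd" where
  "res_partner alpha sigma M S x =
     (if sigma (sigma x) \<in> M then
        (let d = sigma (sigma x) in
           if d \<in> S then sigma (alpha d) else sigma (sigma (alpha d)))
      else
        (let d = sigma x in
           if d \<in> S then sigma (sigma (alpha d)) else sigma (alpha d)))"

text \<open>Number of closed curves of the state: components of the graph on non-matching darts
whose links are the remaining edges and the resolution arcs.\<close>
definition num_curves :: "'d set \<Rightarrow> ('d \<Rightarrow> 'd) \<Rightarrow> ('d \<Rightarrow> 'd) \<Rightarrow> 'd set \<Rightarrow> 'd set \<Rightarrow> nat" where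
  "num_curves D alpha sigma M S =
     card ((D - M) // (({(x, alpha x) | x. x \<in> D - M} \<union>
                         {(x, res_partner alpha sigma M S x) | x. x \<in> D - M})\<^sup>*))"

text \<open>The 2-factor polynomial, as a function of z (evaluation of the Laurent polynomial).
States s are represented by the set S of darts of matching edges assigned 1,
so |s| = card S div 2.\<close>
definition two_factor_poly :: "'d set \<Rightarrow> ('d \<Rightarrow> 'd) \<Rightarrow> ('d \<Rightarrow> 'd) \<Rightarrow> 'd set \<Rightarrow> real \<Rightarrow> real" where
  "two_factor_poly D alpha sigma M z =
     (\<Sum>S\<in>{S. S \<subseteq> M \<and> (\<forall>x\<in>S. alpha x \<in> S)}.
        (- z) ^ (card S div 2) * (z + inverse z) ^ num_curves D alpha sigma M S)"

definition T_poly :: "'d set \<Rightarrow> ('d \<Rightarrow> 'd) \<Rightarrow> ('d \<Rightarrow> 'd) \<Rightarrow> real \<Rightarrow> real" where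
  "T_poly D alpha sigma z =
     (\<Sum>M\<in>{M. perfect_matching D alpha sigma M}. two_factor_poly D alpha sigma M z)"

definition tait_colorings :: "'d set \<Rightarrow> ('d \<Rightarrow> 'd) \<Rightarrow> ('d \<Rightarrow> 'd) \<Rightarrow> ('d \<Rightarrow> nat) set" where
  "tait_colorings D alpha sigma =
     {c. (\<forall>x\<in>D. c x < 3 \<and> c (alpha x) = c x \<and> c (sigma x) \<noteq> c x) \<and> (\<forall>x. x \<notin> D \<longrightarrow> c x = 0)}"

end

theory Submission
  imports Defs "HOL-Library.Disjoint_Sets"
begin

text \<open>At z = 1 the factor (z + 1/z)^c(s) = 2^c(s) counts the ways of colouring the curves
  of the state s with the colours 1 and 2, i.e. the sets L of non-matching edges that are
  unions of curves. Exchanging the two sums, each such L receives the signed sum over the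
  states it is compatible with. If M and L do not form a Tait coloring, some matching edge has
  its four neighbouring edge-ends in one colour class, and toggling the state of that edge is
  a sign-reversing involution; otherwise exactly one state is compatible. Hence T_G(1) counts
  Tait colorings with signs, and it remains to show that the number of matching edges in
  state 1 is even. For planar G the even subgraph formed by the colours 0 and 1 bounds a set
  of faces (Euler's formula), and counting modulo 2 around these faces gives the parity.\<close>

lemma card_closed_subsets:
  assumes eq: "equiv A R" and fin: "finite A"
  shows "card {W. W \<subseteq> A \<and> R `` W \<subseteq> W} = 2 ^ card (A // R)"
proof -
  have "bij_betw Union (Pow (A // R)) {W. W \<subseteq> A \<and> R `` W \<subseteq> W}"
  proof (rule bij_betw_imageI)
    have sub: "Q1 \<subseteq> Q2" if Q: "Q1 \<subseteq> A // R" "Q2 \<subseteq> A // R" "\<Union>Q1 = \<Union>Q2" for Q1 Q2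
    proof
      fix c assume c: "c \<in> Q1"
      then have cA: "c \<in> A // R" using Q by blast
      then obtain x where "x \<in> c" using in_quotient_imp_non_empty[OF eq] by blast
      then obtain c' where "c' \<in> Q2" "x \<in> c'" using Q c by blast
      then show "c \<in> Q2" using quotient_disj[OF eq cA, of c'] Q \<open>x \<in> c\<close> by blast
    qed
    show "inj_on Union (Pow (A // R))"
    proof (rule inj_onI)
      fix Q1 Q2 assume "Q1 \<in> Pow (A // R)" "Q2 \<in> Pow (A // R)" "\<Union>Q1 = \<Union>Q2"
      then show "Q1 = Q2" using sub[of Q1 Q2] sub[of Q2 Q1] by auto
    qed
    show "Union ` Pow (A // R) = {W. W \<subseteq> A \<and> R `` W \<subseteq> W}"
    proof (intro set_eqI iffI)
      fix W assume "W \<in> Union ` Pow (A // R)"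
      then show "W \<in> {W. W \<subseteq> A \<and> R `` W \<subseteq> W}"
        using in_quotient_imp_subset[OF eq] in_quotient_imp_closed[OF eq] by blast
    next
      fix W assume W: "W \<in> {W. W \<subseteq> A \<and> R `` W \<subseteq> W}"
      have "(\<lambda>x. R `` {x}) ` W \<subseteq> A // R" using W by (auto intro: quotientI)
      moreover have "\<Union> ((\<lambda>x. R `` {x}) ` W) = W"
        using W eq unfolding equiv_def refl_on_def by blast
      ultimately show "W \<in> Union ` Pow (A // R)" by blast
    qed
  qed
  then have "card {W. W \<subseteq> A \<and> R `` W \<subseteq> W} = card (Pow (A // R))"
    by (simp add: bij_betw_same_card)
  then show ?thesis
    using card_Pow finite_quotient[OF fin equiv_type[OF eq]] by simp
qed

lemma card_closed_subsets_rtrancl: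
  assumes fin: "finite A" and r: "r \<subseteq> A \<times> A" "sym r"
  shows "card {W. W \<subseteq> A \<and> r `` W \<subseteq> W} = 2 ^ card (A // r\<^sup>*)"
proof -
  define R where "R = r\<^sup>* \<inter> A \<times> A"
  have stays: "y \<in> A" if "(x, y) \<in> r\<^sup>*" "x \<in> A" for x y
    using that by (induction rule: rtrancl_induct) (use r in auto)
  have "equiv A R"
  proof (rule equivI)
    show "R \<subseteq> A \<times> A" "refl_on A R" unfolding R_def refl_on_def by auto
    show "sym R" using sym_rtrancl[OF r(2)] unfolding R_def sym_def by blast
    show "trans R" unfolding R_def trans_def by (blast intro: rtrancl_trans)
  qed
  moreover have "A // R = A // r\<^sup>*"
  proof -
    have "R `` {x} = r\<^sup>* `` {x}" if "x \<in> A" for x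
      unfolding R_def using stays that by blast
    then show ?thesis unfolding quotient_def by (simp cong: SUP_cong)
  qed
  moreover have closed_iff: "R `` W \<subseteq> W \<longleftrightarrow> r `` W \<subseteq> W" if "W \<subseteq> A" for W
  proof
    assume "R `` W \<subseteq> W"
    then show "r `` W \<subseteq> W" unfolding R_def using r(1) by blast
  next
    assume closed: "r `` W \<subseteq> W"
    have "y \<in> W" if "(x, y) \<in> r\<^sup>*" "x \<in> W" for x y
      using that by (induction rule: rtrancl_induct) (use closed in auto)
    then show "R `` W \<subseteq> W" unfolding R_def by blast
  qed
  moreover have "{W. W \<subseteq> A \<and> r `` W \<subseteq> W} = {W. W \<subseteq> A \<and> R `` W \<subseteq> W}"
    by (intro Collect_cong) (use closed_iff in blast)
  ultimately show ?thesis using card_closed_subsets[OF _ fin] by simp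
qed

lemma funpow_in: "f ` D \<subseteq> D \<Longrightarrow> x \<in> D \<Longrightarrow> (f ^^ n) x \<in> D"
  by (induction n) auto

lemma funpow_inj_on:
  assumes "inj_on f D" "f ` D \<subseteq> D" "x \<in> D" "y \<in> D" "(f ^^ n) x = (f ^^ n) y"
  shows "x = y"
  using assms(5)
proof (induction n)
  case (Suc n)
  then have "f ((f ^^ n) x) = f ((f ^^ n) y)" by simp
  then show ?case
    using inj_onD[OF assms(1) _ funpow_in[OF assms(2,3)] funpow_in[OF assms(2,4)]] Suc.IH by blast
qed simp

lemma funpow_period:
  assumes fin: "finite D" and im: "f ` D \<subseteq> D" and inj: "inj_on f D" and x: "x \<in> D"
  obtains k where "k > 0" "(f ^^ k) x = x"
proof -
  let ?g = "\<lambda>n. (f ^^ n) x"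
  have "\<not> inj_on ?g {..card D}"
  proof
    assume "inj_on ?g {..card D}"
    then have "card (?g ` {..card D}) = card D + 1" by (simp add: card_image)
    moreover have "?g ` {..card D} \<subseteq> D" using funpow_in[OF im x] by auto
    ultimately show False using card_mono[OF fin, of "?g ` {..card D}"] by linarith
  qed
  then obtain i j where "i \<noteq> j" "?g i = ?g j"
    unfolding inj_on_def by blast
  then have ij: "min i j < max i j" "?g (min i j) = ?g (max i j)"
    by (auto simp: min_def max_def)
  have "(f ^^ min i j) ((f ^^ (max i j - min i j)) x) = (f ^^ (min i j + (max i j - min i j))) x"
    by (simp only: funpow_add comp_apply)
  also have "\<dots> = (f ^^ min i j) x" using ij by simp
  finally have "(f ^^ (max i j - min i j)) x = x"
    using funpow_inj_on[OF inj im funpow_in[OF im x] x] by blast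
  then show thesis using that[of "max i j - min i j"] ij(1) by simp
qed

definition orbit_rel :: "('d \<Rightarrow> 'd) \<Rightarrow> 'd set \<Rightarrow> ('d \<times> 'd) set" where
  "orbit_rel f D = {(x, y). x \<in> D \<and> (\<exists>n. (f ^^ n) x = y)}"

lemma map_orbits_eq_quotient: "map_orbits f D = D // orbit_rel f D"
  unfolding map_orbits_def orbit_rel_def ..

lemma equiv_orbit_rel:
  assumes fin: "finite D" and im: "f ` D \<subseteq> D" and inj: "inj_on f D"
  shows "equiv D (orbit_rel f D)"
proof (rule equivI)
  show "orbit_rel f D \<subseteq> D \<times> D" "refl_on D (orbit_rel f D)"
    unfolding orbit_rel_def refl_on_def using funpow_in[OF im] by (auto intro: exI[of _ 0])
  show "sym (orbit_rel f D)"
  proof (rule symI)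
    fix x y assume "(x, y) \<in> orbit_rel f D"
    then obtain n where x: "x \<in> D" and y: "(f ^^ n) x = y" unfolding orbit_rel_def by auto
    obtain k where k: "k > 0" "(f ^^ k) x = x" using funpow_period[OF fin im inj x] .
    have "(f ^^ (k * m)) x = x" for m
      by (induction m) (simp_all add: funpow_add k(2))
    have "(k - 1) * n + n = k * n" using k(1) by (cases k) auto
    then have "(f ^^ ((k - 1) * n)) y = (f ^^ (k * n)) x"
      using y by (metis funpow_add comp_apply)
    then have "(f ^^ ((k - 1) * n)) y = x" using \<open>(f ^^ (k * n)) x = x\<close> by simp
    moreover have "y \<in> D" using y funpow_in[OF im x, of n] by simp
    ultimately show "(y, x) \<in> orbit_rel f D" unfolding orbit_rel_def by blast
  qed
  show "trans (orbit_rel f D)"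
  proof (rule transI)
    fix x y z assume "(x, y) \<in> orbit_rel f D" "(y, z) \<in> orbit_rel f D"
    then obtain m n where "x \<in> D" "(f ^^ m) x = y" "(f ^^ n) y = z" unfolding orbit_rel_def by auto
    then have "x \<in> D" "(f ^^ (n + m)) x = z" by (simp_all add: funpow_add)
    then show "(x, z) \<in> orbit_rel f D" unfolding orbit_rel_def by blast
  qed
qed

lemma orbit_rel_closed_iff:
  assumes "W \<subseteq> D"
  shows "orbit_rel f D `` W \<subseteq> W \<longleftrightarrow> f ` W \<subseteq> W"
proof
  assume "orbit_rel f D `` W \<subseteq> W"
  moreover have "(x, f x) \<in> orbit_rel f D" if "x \<in> W" for x
    unfolding orbit_rel_def using that assms by (auto intro: exI[of _ 1])
  ultimately show "f ` W \<subseteq> W" by blast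
next
  assume inv: "f ` W \<subseteq> W"
  have "(f ^^ n) x \<in> W" if "x \<in> W" for x n
    by (induction n) (use that inv in auto)
  then show "orbit_rel f D `` W \<subseteq> W" unfolding orbit_rel_def by blast
qed

lemma card_invariant_subsets:
  assumes "finite D" "f ` D \<subseteq> D" "inj_on f D"
  shows "card {W. W \<subseteq> D \<and> f ` W \<subseteq> W} = 2 ^ card (map_orbits f D)"
proof -
  have "{W. W \<subseteq> D \<and> f ` W \<subseteq> W} = {W. W \<subseteq> D \<and> orbit_rel f D `` W \<subseteq> W}"
    using orbit_rel_closed_iff[of _ D f] by blast
  then show ?thesis
    unfolding map_orbits_eq_quotient
    using card_closed_subsets[OF equiv_orbit_rel[OF assms] assms(1)] by simp
qed

lemma card_eq_twice_card_orbits_involution: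
  assumes fin: "finite W" and im: "f ` W \<subseteq> W"
    and inv: "\<And>x. x \<in> W \<Longrightarrow> f (f x) = x" and fpf: "\<And>x. x \<in> W \<Longrightarrow> f x \<noteq> x"
  shows "card W = 2 * card (map_orbits f W)"
proof -
  let ?R = "orbit_rel f W"
  have eq: "equiv W ?R"
    by (rule equiv_orbit_rel[OF fin im]) (metis inj_onI inv)
  have orbit: "?R `` {x} = {x, f x}" if "x \<in> W" for x
  proof
    have "(f ^^ n) x \<in> {x, f x}" for n by (induction n) (use that inv in auto)
    then show "?R `` {x} \<subseteq> {x, f x}" unfolding orbit_rel_def by auto
    show "{x, f x} \<subseteq> ?R `` {x}"
      unfolding orbit_rel_def using that by (auto intro: exI[of _ 0] exI[of _ 1])
  qed
  have "2 * card (W // ?R) = card (\<Union> (W // ?R))"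
  proof (rule card_partition)
    show "finite (W // ?R)" using finite_quotient[OF fin equiv_type[OF eq]] .
    show "finite (\<Union> (W // ?R))" using Union_quotient[OF eq] fin by simp
    show "card c = 2" if c: "c \<in> W // ?R" for c
    proof -
      obtain x where "x \<in> W" "c = {x, f x}" using c orbit unfolding quotient_def by auto
      then show ?thesis using fpf[of x] by (simp add: eq_commute)
    qed
    show "c1 \<inter> c2 = {}" if "c1 \<in> W // ?R" "c2 \<in> W // ?R" "c1 \<noteq> c2" for c1 c2
      using that quotient_disj[OF eq] by blast
  qed
  then show ?thesis unfolding map_orbits_eq_quotient Union_quotient[OF eq] by simp
qed

lemma even_card_involution:
  assumes "finite W" "f ` W \<subseteq> W"
    and "\<And>x. x \<in> W \<Longrightarrow> f (f x) = x" "\<And>x. x \<in> W \<Longrightarrow> f x \<noteq> x"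
  shows "even (card W)"
  using card_eq_twice_card_orbits_involution[OF assms] by simp

lemma card_sym_diff:
  assumes "finite A" "finite B"
  shows "card (sym_diff A B) + 2 * card (A \<inter> B) = card A + card B"
proof -
  have "card (sym_diff A B) = card ((A \<union> B) - (A \<inter> B))"
    by (rule arg_cong[where f = card]) blast
  also have "\<dots> = card (A \<union> B) - card (A \<inter> B)"
    using assms by (intro card_Diff_subset) auto
  finally have "card (sym_diff A B) = card (A \<union> B) - card (A \<inter> B)" .
  moreover have "card (A \<inter> B) \<le> card (A \<union> B)" using assms by (intro card_mono) auto
  ultimately show ?thesis using card_Un_Int[OF assms] by linarith
qed

lemma odd_card_sym_diff:
  assumes "finite A" "finite B"
  shows "odd (card (sym_diff A B)) \<longleftrightarrow> odd (card A) \<noteq> odd (card B)"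
  using card_sym_diff[OF assms] by presburger

lemma card_eq_mult_card_image:
  assumes "finite A" "\<And>y. y \<in> g ` A \<Longrightarrow> card {x \<in> A. g x = y} = k"
  shows "card A = k * card (g ` A)"
proof -
  have "card A = (\<Sum>y\<in>g ` A. card {x \<in> A. g x = y})"
    using sum.image_gen[OF assms(1), of "\<lambda>_. 1::nat" g] by simp
  then show ?thesis using assms(2) by simp
qed

lemma card_three_Int:
  assumes "p \<noteq> q" "q \<noteq> r" "p \<noteq> r"
  shows "card ({p, q, r} \<inter> Z) = of_bool (p \<in> Z) + of_bool (q \<in> Z) + of_bool (r \<in> Z)"
  using assms by (cases "p \<in> Z"; cases "q \<in> Z"; cases "r \<in> Z") (auto simp: card_insert_if)

locale trivalent =
  fixes D :: "'d set" and alpha sigma :: "'d \<Rightarrow> 'd"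
  assumes trivalent: "trivalent_map D alpha sigma"
begin

lemma finite_darts: "finite D"
  using trivalent unfolding trivalent_map_def by blast

lemma alpha_in: "x \<in> D \<Longrightarrow> alpha x \<in> D"
  and sigma_in: "x \<in> D \<Longrightarrow> sigma x \<in> D"
  using trivalent unfolding trivalent_map_def bij_betw_def by blast+

lemma alpha_alpha [simp]: "x \<in> D \<Longrightarrow> alpha (alpha x) = x"
  and alpha_neq: "x \<in> D \<Longrightarrow> alpha x \<noteq> x"
  and sigma_neq: "x \<in> D \<Longrightarrow> sigma x \<noteq> x"
  and sigma_sigma_neq: "x \<in> D \<Longrightarrow> sigma (sigma x) \<noteq> x"
  and sigma_sigma_sigma [simp]: "x \<in> D \<Longrightarrow> sigma (sigma (sigma x)) = x"
  using trivalent unfolding trivalent_map_def by blast+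

lemma sigma_sigma_neq_sigma: "x \<in> D \<Longrightarrow> sigma (sigma x) \<noteq> sigma x"
  using sigma_neq[OF sigma_in] by blast

lemma alpha_inj: "x \<in> D \<Longrightarrow> y \<in> D \<Longrightarrow> alpha x = alpha y \<Longrightarrow> x = y"
  by (metis alpha_alpha)

lemma sigma_inj: "x \<in> D \<Longrightarrow> y \<in> D \<Longrightarrow> sigma x = sigma y \<Longrightarrow> x = y"
  by (metis sigma_sigma_sigma)

lemma inj_on_alpha: "inj_on alpha D"
  by (rule inj_onI) (rule alpha_inj)

lemma inj_on_sigma: "inj_on sigma D"
  by (rule inj_onI) (rule sigma_inj)

lemma inj_on_face_step: "inj_on (sigma \<circ> alpha) D"
  by (rule inj_onI) (simp add: alpha_in alpha_inj sigma_inj)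

lemma alpha_image: "alpha ` D \<subseteq> D"
  and sigma_image: "sigma ` D \<subseteq> D"
  and face_step_image: "(sigma \<circ> alpha) ` D \<subseteq> D"
  using alpha_in sigma_in by auto

definition vertex :: "'d \<Rightarrow> 'd set" where
  "vertex x = {x, sigma x, sigma (sigma x)}"

lemma vertex_subset: "x \<in> D \<Longrightarrow> vertex x \<subseteq> D"
  unfolding vertex_def using sigma_in by auto

lemma self_in_vertex: "x \<in> vertex x"
  unfolding vertex_def by simp

lemma vertex_sigma: "x \<in> D \<Longrightarrow> vertex (sigma x) = vertex x"
  unfolding vertex_def by auto

lemma vertex_eqI: "x \<in> D \<Longrightarrow> y \<in> vertex x \<Longrightarrow> vertex y = vertex x"
  unfolding vertex_def using sigma_in by auto

lemma in_vertex_commute: "x \<in> D \<Longrightarrow> y \<in> D \<Longrightarrow> y \<in> vertex x \<longleftrightarrow> x \<in> vertex y"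
  using vertex_eqI self_in_vertex by metis

lemma card_vertex_Int:
  assumes "x \<in> D"
  shows "card (vertex x \<inter> Z) = of_bool (x \<in> Z) + of_bool (sigma x \<in> Z) + of_bool (sigma (sigma x) \<in> Z)"
  unfolding vertex_def
  using sigma_neq[OF assms] sigma_sigma_neq[OF assms] sigma_sigma_neq_sigma[OF assms]
  by (intro card_three_Int) auto

definition edge_sets :: "'d set set" where
  "edge_sets = {Z. Z \<subseteq> D \<and> alpha ` Z \<subseteq> Z}"

definition vertex_sets :: "'d set set" where
  "vertex_sets = {W. W \<subseteq> D \<and> sigma ` W \<subseteq> W}"

definition face_sets :: "'d set set" where
  "face_sets = {X. X \<subseteq> D \<and> (sigma \<circ> alpha) ` X \<subseteq> X}"

lemma finite_edge_sets: "finite edge_sets"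
  unfolding edge_sets_def using finite_darts by (simp add: finite_Collect_subsets)

lemma card_vertex_sets: "card vertex_sets = 2 ^ card (map_orbits sigma D)"
  unfolding vertex_sets_def by (rule card_invariant_subsets[OF finite_darts sigma_image inj_on_sigma])

lemma card_face_sets: "card face_sets = 2 ^ card (map_orbits (sigma \<circ> alpha) D)"
  unfolding face_sets_def
  by (rule card_invariant_subsets[OF finite_darts face_step_image inj_on_face_step])

lemma card_edge_sets: "card edge_sets = 2 ^ (card D div 2)"
proof -
  have "card D = 2 * card (map_orbits alpha D)"
    by (rule card_eq_twice_card_orbits_involution[OF finite_darts alpha_image alpha_alpha alpha_neq])
  then show ?thesis
    unfolding edge_sets_def
    using card_invariant_subsets[OF finite_darts alpha_image inj_on_alpha] by simp
qed

lemma edge_set_alpha_iff: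
  assumes Z: "Z \<in> edge_sets" and x: "x \<in> D"
  shows "alpha x \<in> Z \<longleftrightarrow> x \<in> Z"
proof
  assume "alpha x \<in> Z"
  then have "alpha (alpha x) \<in> Z" using Z unfolding edge_sets_def by blast
  then show "x \<in> Z" using x by simp
qed (use Z in \<open>auto simp: edge_sets_def\<close>)

lemma even_card_edge_set:
  assumes "Z \<in> edge_sets"
  shows "even (card Z)"
proof (rule even_card_involution[where f = alpha])
  have "Z \<subseteq> D" "alpha ` Z \<subseteq> Z" using assms unfolding edge_sets_def by auto
  then show "finite Z" "alpha ` Z \<subseteq> Z" "\<And>x. x \<in> Z \<Longrightarrow> alpha (alpha x) = x"
    "\<And>x. x \<in> Z \<Longrightarrow> alpha x \<noteq> x"
    using finite_subset[OF _ finite_darts] alpha_neq by auto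
qed

lemma sym_diff_edge_sets:
  assumes "Z1 \<in> edge_sets" "Z2 \<in> edge_sets"
  shows "sym_diff Z1 Z2 \<in> edge_sets"
proof -
  have "alpha x \<in> sym_diff Z1 Z2" if "x \<in> sym_diff Z1 Z2" for x
    using that assms edge_set_alpha_iff[OF assms(1)] edge_set_alpha_iff[OF assms(2)]
    unfolding edge_sets_def by blast
  then show ?thesis using assms unfolding edge_sets_def by blast
qed

definition odd_vertices :: "'d set \<Rightarrow> 'd set" where
  "odd_vertices Z = {x \<in> D. odd (card (vertex x \<inter> Z))}"

definition cycle_space :: "'d set set" where
  "cycle_space = {Z \<in> edge_sets. odd_vertices Z = {}}"

definition face_boundary :: "'d set \<Rightarrow> 'd set" where
  "face_boundary X = {x \<in> D. (x \<in> X) \<noteq> (alpha x \<in> X)}"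

lemma odd_vertices_empty [simp]: "odd_vertices {} = {}"
  unfolding odd_vertices_def by simp

lemma odd_vertices_sym_diff: "odd_vertices (sym_diff Z1 Z2) = sym_diff (odd_vertices Z1) (odd_vertices Z2)"
proof -
  have "odd (card (vertex x \<inter> sym_diff Z1 Z2)) \<longleftrightarrow>
      odd (card (vertex x \<inter> Z1)) \<noteq> odd (card (vertex x \<inter> Z2))" for x
  proof -
    have "vertex x \<inter> sym_diff Z1 Z2 = sym_diff (vertex x \<inter> Z1) (vertex x \<inter> Z2)" by blast
    moreover have "finite (vertex x)" unfolding vertex_def by simp
    ultimately show ?thesis by (simp add: odd_card_sym_diff)
  qed
  then show ?thesis unfolding odd_vertices_def by blast
qed

lemma odd_vertices_edge:
  assumes y: "y \<in> D"
  shows "odd_vertices {y, alpha y} = sym_diff (vertex y) (vertex (alpha y))"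
proof (rule set_eqI)
  fix x
  have ay: "alpha y \<in> D" using alpha_in[OF y] .
  show "x \<in> odd_vertices {y, alpha y} \<longleftrightarrow> x \<in> sym_diff (vertex y) (vertex (alpha y))"
  proof (cases "x \<in> D")
    case False
    then show ?thesis using vertex_subset[OF y] vertex_subset[OF ay] by (auto simp: odd_vertices_def)
  next
    case True
    have "card (vertex x \<inter> {y, alpha y}) = of_bool (y \<in> vertex x) + of_bool (alpha y \<in> vertex x)"
      using alpha_neq[OF y] by (cases "y \<in> vertex x"; cases "alpha y \<in> vertex x") (auto simp: Int_insert_right)
    then show ?thesis
      unfolding odd_vertices_def in_vertex_commute[OF True y] in_vertex_commute[OF True ay]
      using True by auto
  qed
qed

lemma face_set_image:
  assumes "X \<in> face_sets"
  shows "(sigma \<circ> alpha) ` X = X"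
proof (rule endo_inj_surj)
  have "X \<subseteq> D" "(sigma \<circ> alpha) ` X \<subseteq> X" using assms unfolding face_sets_def by auto
  then show "finite X" "(sigma \<circ> alpha) ` X \<subseteq> X" "inj_on (sigma \<circ> alpha) X"
    using finite_subset[OF _ finite_darts] inj_on_subset[OF inj_on_face_step] by auto
qed

lemma face_set_alpha_iff:
  assumes X: "X \<in> face_sets" and y: "y \<in> D"
  shows "alpha y \<in> X \<longleftrightarrow> sigma y \<in> X"
proof
  assume "alpha y \<in> X"
  then have "(sigma \<circ> alpha) (alpha y) \<in> X" using X unfolding face_sets_def by blast
  then show "sigma y \<in> X" using y by simp
next
  assume "sigma y \<in> X"
  then obtain x where "x \<in> X" "sigma y = sigma (alpha x)" using face_set_image[OF X] by force
  moreover have "X \<subseteq> D" using X unfolding face_sets_def by blast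
  ultimately show "alpha y \<in> X" using y by (metis alpha_alpha alpha_in sigma_inj subsetD)
qed

lemma face_set_complement:
  assumes X: "X \<in> face_sets"
  shows "D - X \<in> face_sets"
proof -
  have "sigma (alpha x) \<in> D - X" if "x \<in> D - X" for x
    using that face_set_alpha_iff[OF X alpha_in, of x] alpha_in sigma_in by auto
  then show ?thesis unfolding face_sets_def by auto
qed

lemma face_boundary_complement: "face_boundary (D - X) = face_boundary X"
  unfolding face_boundary_def using alpha_in by auto

lemma face_boundary_in_cycle_space:
  assumes X: "X \<in> face_sets"
  shows "face_boundary X \<in> cycle_space"
proof -
  have boundary: "y \<in> face_boundary X \<longleftrightarrow> (y \<in> X) \<noteq> (sigma y \<in> X)" if "y \<in> D" for y
    using face_set_alpha_iff[OF X that] that unfolding face_boundary_def by auto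
  have "even (card (vertex x \<inter> face_boundary X))" if x: "x \<in> D" for x
    unfolding card_vertex_Int[OF x] boundary[OF x] boundary[OF sigma_in[OF x]]
      boundary[OF sigma_in[OF sigma_in[OF x]]] sigma_sigma_sigma[OF x]
    by (cases "x \<in> X"; cases "sigma x \<in> X"; cases "sigma (sigma x) \<in> X") auto
  moreover have "face_boundary X \<in> edge_sets"
    unfolding face_boundary_def edge_sets_def using alpha_in by auto
  ultimately show ?thesis unfolding cycle_space_def odd_vertices_def by auto
qed

end

section \<open>Cycles of planar maps bound sets of faces\<close>

locale planar_trivalent = trivalent +
  assumes connected: "connected_map D alpha sigma"
    and planar: "planar_map D alpha sigma"
begin

lemma darts_nonempty: "D \<noteq> {}"
proof
  assume "D = {}"
  then have "map_orbits f D = {}" for f unfolding map_orbits_def quotient_def by simp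
  then show False using planar \<open>D = {}\<close> unfolding planar_map_def by simp
qed

lemma closed_subset_eq_darts:
  assumes T: "T \<subseteq> D" "alpha ` T \<subseteq> T" "sigma ` T \<subseteq> T" and x0: "x0 \<in> T"
  shows "T = D"
proof
  show "D \<subseteq> T"
  proof
    fix y assume y: "y \<in> D"
    have "(x0, y) \<in> ({(a, alpha a) | a. a \<in> D} \<union> {(a, sigma a) | a. a \<in> D})\<^sup>*"
      using connected x0 T(1) y unfolding connected_map_def by blast
    then show "y \<in> T"
      by (induction rule: rtrancl_induct) (use x0 T in auto)
  qed
qed (use T in auto)

lemma odd_vertices_path:
  assumes x0: "x0 \<in> D" and y: "y \<in> D"
  obtains Z where "Z \<in> edge_sets" "odd_vertices Z = sym_diff (vertex x0) (vertex y)"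
proof -
  have "(x0, y) \<in> ({(a, alpha a) | a. a \<in> D} \<union> {(a, sigma a) | a. a \<in> D})\<^sup>*"
    using connected x0 y unfolding connected_map_def by blast
  then have "\<exists>Z\<in>edge_sets. odd_vertices Z = sym_diff (vertex x0) (vertex y)"
  proof (induction rule: rtrancl_induct)
    case base
    have "{} \<in> edge_sets" unfolding edge_sets_def by simp
    then show ?case by force
  next
    case (step a b)
    then obtain Z where Z: "Z \<in> edge_sets" "odd_vertices Z = sym_diff (vertex x0) (vertex a)"
      by blast
    from step(2) consider "a \<in> D" "b = alpha a" | "a \<in> D" "b = sigma a" by blast
    then show ?case
    proof cases
      case 1
      have "{a, alpha a} \<in> edge_sets" unfolding edge_sets_def using 1 alpha_in by auto
      moreover have "odd_vertices (sym_diff Z {a, alpha a}) = sym_diff (vertex x0) (vertex b)"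
        unfolding odd_vertices_sym_diff Z(2) odd_vertices_edge[OF 1(1)] 1(2) by blast
      ultimately show ?thesis using sym_diff_edge_sets[OF Z(1)] by blast
    next
      case 2
      then show ?thesis using Z vertex_sigma by auto
    qed
  qed
  then show thesis using that by blast
qed

lemma vertex_set_odd_vertices_cases:
  assumes x0: "x0 \<in> D" and W: "W \<in> vertex_sets"
  shows "W \<in> odd_vertices ` edge_sets \<or> sym_diff W (vertex x0) \<in> odd_vertices ` edge_sets"
  using W
proof (induction "card W" arbitrary: W rule: less_induct)
  case less
  have WD: "W \<subseteq> D" and Wc: "sigma ` W \<subseteq> W" using less.prems unfolding vertex_sets_def by auto
  show ?case
  proof (cases "W = {}")
    case True
    have "{} \<in> edge_sets" unfolding edge_sets_def by simp
    then show ?thesis using True odd_vertices_empty by (metis image_eqI)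
  next
    case False
    then obtain x where x: "x \<in> W" by blast
    have xD: "x \<in> D" using x WD by blast
    have vx: "vertex x \<subseteq> W" unfolding vertex_def using x Wc by auto
    let ?W = "W - vertex x"
    have "sigma y \<notin> vertex x" if "y \<in> ?W" for y
      using that WD vertex_eqI[OF xD, of "sigma y"] vertex_sigma self_in_vertex by blast
    then have W': "?W \<in> vertex_sets" using WD Wc unfolding vertex_sets_def by blast
    have smaller: "card ?W < card W"
      using x self_in_vertex[of x] finite_subset[OF WD finite_darts] by (intro psubset_card_mono) auto
    obtain Zx where Zx: "Zx \<in> edge_sets" "odd_vertices Zx = sym_diff (vertex x0) (vertex x)"
      using odd_vertices_path[OF x0 xD] .
    from less.hyps[OF smaller W'] show ?thesis
    proof
      assume "?W \<in> odd_vertices ` edge_sets"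
      then obtain Z where Z: "Z \<in> edge_sets" "odd_vertices Z = ?W" by auto
      have "odd_vertices (sym_diff Z Zx) = sym_diff W (vertex x0)"
        unfolding odd_vertices_sym_diff Z(2) Zx(2) using vx by blast
      then show ?thesis using sym_diff_edge_sets[OF Z(1) Zx(1)] by (metis image_eqI)
    next
      assume "sym_diff ?W (vertex x0) \<in> odd_vertices ` edge_sets"
      then obtain Z where Z: "Z \<in> edge_sets" "odd_vertices Z = sym_diff ?W (vertex x0)" by auto
      have "odd_vertices (sym_diff Z Zx) = W"
        unfolding odd_vertices_sym_diff Z(2) Zx(2) using vx by blast
      then show ?thesis using sym_diff_edge_sets[OF Z(1) Zx(1)] by (metis image_eqI)
    qed
  qed
qed

lemma card_vertex_sets_le: "card vertex_sets \<le> 2 * card (odd_vertices ` edge_sets)"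
proof -
  obtain x0 where x0: "x0 \<in> D" using darts_nonempty by blast
  let ?I = "odd_vertices ` edge_sets"
  have fin: "finite ?I" using finite_edge_sets by simp
  have "vertex_sets \<subseteq> ?I \<union> (\<lambda>W. sym_diff W (vertex x0)) ` ?I"
  proof
    fix W assume W: "W \<in> vertex_sets"
    have "W = sym_diff (sym_diff W (vertex x0)) (vertex x0)" by blast
    then have "sym_diff W (vertex x0) \<in> ?I \<Longrightarrow> W \<in> (\<lambda>W. sym_diff W (vertex x0)) ` ?I"
      by (rule image_eqI)
    then show "W \<in> ?I \<union> (\<lambda>W. sym_diff W (vertex x0)) ` ?I"
      using vertex_set_odd_vertices_cases[OF x0 W] by blast
  qed
  then have "card vertex_sets \<le> card (?I \<union> (\<lambda>W. sym_diff W (vertex x0)) ` ?I)"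
    using fin by (intro card_mono) simp_all
  also have "\<dots> \<le> card ?I + card ((\<lambda>W. sym_diff W (vertex x0)) ` ?I)" by (rule card_Un_le)
  also have "\<dots> \<le> 2 * card ?I" using card_image_le[OF fin] by simp
  finally show ?thesis .
qed

text \<open>The fibres of odd_vertices on edge sets are the cosets of the cycle space.\<close>

lemma card_edge_sets_eq: "card edge_sets = card cycle_space * card (odd_vertices ` edge_sets)"
proof (rule card_eq_mult_card_image[OF finite_edge_sets])
  fix V assume "V \<in> odd_vertices ` edge_sets"
  then obtain Z0 where Z0: "Z0 \<in> edge_sets" "V = odd_vertices Z0" by auto
  have "bij_betw (\<lambda>C. sym_diff C Z0) cycle_space {Z \<in> edge_sets. odd_vertices Z = V}"
  proof (rule bij_betw_byWitness[where f' = "\<lambda>Z. sym_diff Z Z0"])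
    show "\<forall>C\<in>cycle_space. sym_diff (sym_diff C Z0) Z0 = C"
      "\<forall>Z\<in>{Z \<in> edge_sets. odd_vertices Z = V}. sym_diff (sym_diff Z Z0) Z0 = Z" by auto
    show "(\<lambda>C. sym_diff C Z0) ` cycle_space \<subseteq> {Z \<in> edge_sets. odd_vertices Z = V}"
      using Z0 sym_diff_edge_sets unfolding cycle_space_def by (auto simp: odd_vertices_sym_diff)
    show "(\<lambda>Z. sym_diff Z Z0) ` {Z \<in> edge_sets. odd_vertices Z = V} \<subseteq> cycle_space"
      using Z0 sym_diff_edge_sets unfolding cycle_space_def by (auto simp: odd_vertices_sym_diff)
  qed
  then show "card {Z \<in> edge_sets. odd_vertices Z = V} = card cycle_space"
    by (simp add: bij_betw_same_card)
qed

lemma face_boundary_eq_iff: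
  assumes X: "X \<in> face_sets" and X': "X' \<in> face_sets"
  shows "face_boundary X' = face_boundary X \<longleftrightarrow> X' = X \<or> X' = D - X"
proof
  assume eq: "face_boundary X' = face_boundary X"
  have XD: "X \<subseteq> D" "X' \<subseteq> D" using X X' unfolding face_sets_def by auto
  let ?T = "sym_diff X X'"
  have alpha_T: "alpha x \<in> ?T" if x: "x \<in> ?T" for x
  proof -
    have "x \<in> D" using x XD by blast
    then have "((x \<in> X) \<noteq> (alpha x \<in> X)) = ((x \<in> X') \<noteq> (alpha x \<in> X'))"
      using eq unfolding face_boundary_def by blast
    then show ?thesis using x by auto
  qed
  have sigma_T: "sigma x \<in> ?T" if x: "x \<in> ?T" for x
    using alpha_T[OF x] x XD face_set_alpha_iff[OF X] face_set_alpha_iff[OF X'] by blast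
  show "X' = X \<or> X' = D - X"
  proof (cases "?T = {}")
    case False
    then have "?T = D" using closed_subset_eq_darts[of ?T] XD alpha_T sigma_T by blast
    then show ?thesis using XD by blast
  qed blast
qed (use face_boundary_complement in auto)

lemma card_face_sets_eq: "card face_sets = 2 * card (face_boundary ` face_sets)"
proof (rule card_eq_mult_card_image)
  show "finite face_sets"
    unfolding face_sets_def using finite_darts by (simp add: finite_Collect_subsets)
  fix B assume "B \<in> face_boundary ` face_sets"
  then obtain X where X: "X \<in> face_sets" "B = face_boundary X" by auto
  have "X \<noteq> D - X" using darts_nonempty by blast
  moreover have "{X' \<in> face_sets. face_boundary X' = B} = {X, D - X}"
    using X face_boundary_eq_iff face_set_complement by blast
  ultimately show "card {X' \<in> face_sets. face_boundary X' = B} = 2" by simp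
qed

text \<open>The inclusion holds for every map; Euler's formula V - E + F = 2 turns the three counts
  into equality.\<close>

lemma cycle_space_eq_face_boundaries: "cycle_space = face_boundary ` face_sets"
proof -
  let ?V = "card (map_orbits sigma D)" and ?F = "card (map_orbits (sigma \<circ> alpha) D)"
    and ?E = "card D div 2" and ?B = "card (odd_vertices ` edge_sets)"
  have "?F + ?V = ?E + 2" using planar unfolding planar_map_def by simp
  then have euler: "(2::nat) ^ ?F * 2 ^ ?V = 4 * 2 ^ ?E"
    by (simp add: power_add[symmetric])
  have "card cycle_space * 2 ^ ?V \<le> card cycle_space * (2 * ?B)"
    using card_vertex_sets_le card_vertex_sets by simp
  also have "\<dots> = 2 * 2 ^ ?E" using card_edge_sets_eq card_edge_sets by simp
  also have "\<dots> = card (face_boundary ` face_sets) * 2 ^ ?V"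
    using card_face_sets_eq card_face_sets euler by (simp add: mult.commute)
  finally have "card cycle_space \<le> card (face_boundary ` face_sets)" by simp
  moreover have "finite cycle_space" using finite_edge_sets unfolding cycle_space_def by simp
  moreover have "face_boundary ` face_sets \<subseteq> cycle_space"
    using face_boundary_in_cycle_space by auto
  ultimately show ?thesis using card_seteq[of cycle_space "face_boundary ` face_sets"] by simp
qed

lemma face_boundary_eq_sym_diff:
  assumes "X \<subseteq> D"
  shows "face_boundary X = sym_diff X (alpha ` X)"
proof -
  have "x \<in> alpha ` X \<longleftrightarrow> alpha x \<in> X" if "x \<in> D" for x
    using that assms by (metis alpha_alpha image_iff subsetD)
  then show ?thesis unfolding face_boundary_def using assms alpha_in by blast
qed

text \<open>Sum the pointwise statement at alpha x over x in X and reindex one of the sums by the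
  permutation sigma \<circ> alpha of X.\<close>

lemma face_set_parity:
  assumes X: "X \<in> face_sets" and Y: "Y \<in> edge_sets"
    and P: "\<And>y. y \<in> D \<Longrightarrow> (y \<in> P \<longleftrightarrow> sigma y \<in> P) \<longleftrightarrow> y \<notin> Y"
  shows "even (card (alpha ` X \<inter> P) + card (X \<inter> Y) + card (X \<inter> P))"
proof -
  have XD: "X \<subseteq> D" using X unfolding face_sets_def by auto
  have finX: "finite X" using finite_subset[OF XD finite_darts] .
  have "even (of_bool (alpha x \<in> P) + of_bool (x \<in> Y) + of_bool (sigma (alpha x) \<in> P) :: nat)"
    if x: "x \<in> X" for x
  proof -
    have "x \<in> D" using x XD by blast
    then have "(alpha x \<in> P \<longleftrightarrow> sigma (alpha x) \<in> P) \<longleftrightarrow> x \<notin> Y"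
      using P[OF alpha_in] edge_set_alpha_iff[OF Y] by blast
    then show ?thesis by (cases "alpha x \<in> P"; cases "x \<in> Y"; cases "sigma (alpha x) \<in> P") simp_all
  qed
  then have "even (\<Sum>x\<in>X. of_bool (alpha x \<in> P) + of_bool (x \<in> Y) + of_bool (sigma (alpha x) \<in> P) :: nat)"
    by (intro dvd_sum) blast
  then have "even (card (X \<inter> {x. alpha x \<in> P}) + card (X \<inter> Y) + card (X \<inter> {x. sigma (alpha x) \<in> P}))"
    using finX by (simp add: sum.distrib)
  moreover have "card (X \<inter> {x. alpha x \<in> P}) = card (alpha ` X \<inter> P)"
  proof -
    have "alpha ` X \<inter> P = alpha ` (X \<inter> {x. alpha x \<in> P})" by blast
    moreover have "inj_on alpha (X \<inter> {x. alpha x \<in> P})"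
      using inj_on_subset[OF inj_on_alpha] XD by blast
    ultimately show ?thesis by (simp add: card_image)
  qed
  moreover have "card (X \<inter> {x. sigma (alpha x) \<in> P}) = card (X \<inter> P)"
  proof -
    have "(sigma \<circ> alpha) ` (X \<inter> {x. sigma (alpha x) \<in> P}) = (sigma \<circ> alpha) ` X \<inter> P"
      by auto
    also have "\<dots> = X \<inter> P" using face_set_image[OF X] by simp
    finally have "X \<inter> P = (sigma \<circ> alpha) ` (X \<inter> {x. sigma (alpha x) \<in> P})" by simp
    moreover have "inj_on (sigma \<circ> alpha) (X \<inter> {x. sigma (alpha x) \<in> P})"
      using inj_on_subset[OF inj_on_face_step] XD by blast
    then have "card ((sigma \<circ> alpha) ` (X \<inter> {x. sigma (alpha x) \<in> P})) =
        card (X \<inter> {x. sigma (alpha x) \<in> P})"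
      by (rule card_image)
    ultimately show ?thesis by simp
  qed
  ultimately show ?thesis by simp
qed

text \<open>This is where planarity enters: Z is the boundary sym_diff X (alpha ` X) of a face
  set X.\<close>

lemma cycle_parity:
  assumes Z: "Z \<in> cycle_space" and Y: "Y \<in> edge_sets"
    and P: "\<And>y. y \<in> D \<Longrightarrow> (y \<in> P \<longleftrightarrow> sigma y \<in> P) \<longleftrightarrow> y \<notin> Y"
  shows "even (card (Z \<inter> P) + card (Z \<inter> Y) div 2)"
proof -
  obtain X where X: "X \<in> face_sets" and ZX: "Z = face_boundary X"
    using Z cycle_space_eq_face_boundaries by auto
  have XD: "X \<subseteq> D" using X unfolding face_sets_def by auto
  have finX: "finite X" using finite_subset[OF XD finite_darts] .
  have Z_eq: "Z = sym_diff X (alpha ` X)" using face_boundary_eq_sym_diff[OF XD] ZX by simp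
  have "card (Z \<inter> P) + 2 * card (X \<inter> alpha ` X \<inter> P) = card (X \<inter> P) + card (alpha ` X \<inter> P)"
  proof -
    have "Z \<inter> P = sym_diff (X \<inter> P) (alpha ` X \<inter> P)" "X \<inter> P \<inter> (alpha ` X \<inter> P) = X \<inter> alpha ` X \<inter> P"
      using Z_eq by blast+
    then show ?thesis using card_sym_diff[of "X \<inter> P" "alpha ` X \<inter> P"] finX by simp
  qed
  moreover have "card (Z \<inter> Y) + 2 * card (X \<inter> alpha ` X \<inter> Y) = 2 * card (X \<inter> Y)"
  proof -
    have "Z \<inter> Y = sym_diff (X \<inter> Y) (alpha ` X \<inter> Y)" "X \<inter> Y \<inter> (alpha ` X \<inter> Y) = X \<inter> alpha ` X \<inter> Y"
      using Z_eq by blast+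
    moreover have "alpha ` X \<inter> Y = alpha ` (X \<inter> Y)"
      using edge_set_alpha_iff[OF Y] XD by auto
    moreover have "inj_on alpha (X \<inter> Y)" using inj_on_subset[OF inj_on_alpha] XD by blast
    then have "card (alpha ` (X \<inter> Y)) = card (X \<inter> Y)" by (rule card_image)
    ultimately show ?thesis using card_sym_diff[of "X \<inter> Y" "alpha ` X \<inter> Y"] finX by simp
  qed
  moreover have "even (card (X \<inter> alpha ` X \<inter> Y))"
  proof (rule even_card_edge_set)
    have "alpha x \<in> X \<inter> alpha ` X \<inter> Y" if x: "x \<in> X \<inter> alpha ` X \<inter> Y" for x
    proof -
      obtain x' where "x' \<in> X" "x = alpha x'" using x by blast
      then show ?thesis using x XD edge_set_alpha_iff[OF Y, of x] by auto
    qed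
    then show "X \<inter> alpha ` X \<inter> Y \<in> edge_sets" using XD unfolding edge_sets_def by blast
  qed
  moreover have "even (card (alpha ` X \<inter> P) + card (X \<inter> Y) + card (X \<inter> P))"
    using face_set_parity[OF X Y P] .
  moreover have "even (zp + zy div 2)"
    if "zp + 2 * c = a + b" "zy + 2 * e = 2 * y" "even e" "even (b + y + a)" for zp zy c e a b y :: nat
    using that by presburger
  ultimately show ?thesis by blast
qed

end

section \<open>States, curves and the value at z = 1\<close>

context trivalent
begin

definition matchings :: "'d set set" where
  "matchings = {M. perfect_matching D alpha sigma M}"

definition states :: "'d set \<Rightarrow> 'd set set" where
  "states M = {S. S \<subseteq> M \<and> (\<forall>x\<in>S. alpha x \<in> S)}"

abbreviation partner :: "'d set \<Rightarrow> 'd set \<Rightarrow> 'd \<Rightarrow> 'd" where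
  "partner M S \<equiv> res_partner alpha sigma M S"

definition curve_unions :: "'d set \<Rightarrow> 'd set \<Rightarrow> 'd set set" where
  "curve_unions M S = {L. L \<subseteq> D - M \<and> (\<forall>x\<in>L. alpha x \<in> L \<and> partner M S x \<in> L)}"

lemma finite_matchings: "finite matchings"
proof -
  have "matchings \<subseteq> Pow D" unfolding matchings_def perfect_matching_def by blast
  then show ?thesis using finite_darts by (simp add: finite_subset)
qed

context
  fixes M assumes M: "M \<in> matchings"
begin

lemma matching_subset: "M \<subseteq> D"
  and matching_alpha: "x \<in> M \<Longrightarrow> alpha x \<in> M"
  using M unfolding matchings_def perfect_matching_def by blast+

lemma finite_states: "finite (states M)"
proof -
  have "states M \<subseteq> Pow D" unfolding states_def using matching_subset by blast
  then show ?thesis using finite_darts by (simp add: finite_subset)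
qed

lemma matching_at_vertex:
  assumes x: "x \<in> D"
  shows "of_bool (x \<in> M) + of_bool (sigma x \<in> M) + of_bool (sigma (sigma x) \<in> M) = (1::nat)"
proof -
  have "card ({x, sigma x, sigma (sigma x)} \<inter> M) = 1"
    using M x unfolding matchings_def perfect_matching_def by blast
  then show ?thesis using card_vertex_Int[OF x, of M] unfolding vertex_def by simp
qed

lemma matching_in_edge_sets: "M \<in> edge_sets"
  unfolding edge_sets_def using matching_subset matching_alpha by blast

lemma matching_sigma_notin:
  assumes "d \<in> M"
  shows "sigma d \<notin> M" "sigma (sigma d) \<notin> M"
  using matching_at_vertex[OF subsetD[OF matching_subset assms]] assms by auto

lemma non_matching_cases:
  assumes x: "x \<in> D" "x \<notin> M"
  obtains d where "d \<in> M" "x = sigma d" | d where "d \<in> M" "x = sigma (sigma d)"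
proof (cases "sigma (sigma x) \<in> M")
  case True
  then show ?thesis using that(1)[of "sigma (sigma x)"] x by simp
next
  case False
  then have "sigma x \<in> M" using matching_at_vertex[OF x(1)] x(2) by (cases "sigma x \<in> M") auto
  then show ?thesis using that(2)[of "sigma x"] x by simp
qed

lemma matching_dartD:
  assumes d: "d \<in> M"
  shows "d \<in> D" "alpha d \<in> M" "sigma d \<in> D - M" "sigma (sigma d) \<in> D - M"
    "sigma (alpha d) \<in> D - M" "sigma (sigma (alpha d)) \<in> D - M"
proof -
  show dD: "d \<in> D" using d matching_subset by blast
  show ad: "alpha d \<in> M" using matching_alpha[OF d] .
  have adD: "alpha d \<in> D" using alpha_in[OF dD] .
  show "sigma d \<in> D - M" "sigma (sigma d) \<in> D - M"
    using matching_sigma_notin[OF d] sigma_in[OF dD] sigma_in[OF sigma_in[OF dD]] by blast+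
  show "sigma (alpha d) \<in> D - M" "sigma (sigma (alpha d)) \<in> D - M"
    using matching_sigma_notin[OF ad] sigma_in[OF adD] sigma_in[OF sigma_in[OF adD]] by blast+
qed

lemma partner_sigma:
  assumes "d \<in> M"
  shows "partner M S (sigma d) = (if d \<in> S then sigma (alpha d) else sigma (sigma (alpha d)))"
  using assms matching_dartD(1)[OF assms] unfolding res_partner_def by (simp add: Let_def)

lemma partner_sigma_sigma:
  assumes "d \<in> M"
  shows "partner M S (sigma (sigma d)) = (if d \<in> S then sigma (sigma (alpha d)) else sigma (alpha d))"
  using assms matching_dartD(1)[OF assms] matching_sigma_notin(1)[OF assms]
  unfolding res_partner_def by (simp add: Let_def)

lemma partner_in:
  assumes "x \<in> D" "x \<notin> M"
  shows "partner M S x \<in> D - M"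
  using non_matching_cases[OF assms]
proof cases
  case (1 d)
  then show ?thesis using matching_dartD[OF 1(1)] by (simp add: partner_sigma)
next
  case (2 d)
  then show ?thesis using matching_dartD[OF 2(1)] by (simp add: partner_sigma_sigma)
qed

lemma state_alpha_iff:
  assumes "S \<in> states M" "d \<in> M"
  shows "alpha d \<in> S \<longleftrightarrow> d \<in> S"
proof
  assume "alpha d \<in> S"
  then have "alpha (alpha d) \<in> S" using assms(1) unfolding states_def by blast
  then show "d \<in> S" using matching_dartD(1)[OF assms(2)] by simp
qed (use assms(1) in \<open>auto simp: states_def\<close>)

lemma partner_partner:
  assumes S: "S \<in> states M" and x: "x \<in> D" "x \<notin> M"
  shows "partner M S (partner M S x) = x"
  using non_matching_cases[OF x]
proof cases
  case (1 d)
  then show ?thesis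
    using matching_dartD[OF 1(1)] state_alpha_iff[OF S 1(1)]
    by (cases "d \<in> S") (simp_all add: partner_sigma partner_sigma_sigma)
next
  case (2 d)
  then show ?thesis
    using matching_dartD[OF 2(1)] state_alpha_iff[OF S 2(1)]
    by (cases "d \<in> S") (simp_all add: partner_sigma partner_sigma_sigma)
qed

lemma card_curve_unions:
  assumes S: "S \<in> states M"
  shows "card (curve_unions M S) = 2 ^ num_curves D alpha sigma M S"
proof -
  let ?A = "D - M"
  define r where "r = {(x, alpha x) | x. x \<in> ?A} \<union> {(x, partner M S x) | x. x \<in> ?A}"
  have alpha_A: "alpha x \<in> ?A" if "x \<in> ?A" for x
    using that alpha_in edge_set_alpha_iff[OF matching_in_edge_sets] by auto
  have "r \<subseteq> ?A \<times> ?A" unfolding r_def using alpha_A partner_in by auto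
  moreover have "sym r"
  proof (rule symI)
    fix a b assume "(a, b) \<in> r"
    then consider "a \<in> ?A" "b = alpha a" | "a \<in> ?A" "b = partner M S a" unfolding r_def by blast
    then show "(b, a) \<in> r"
    proof cases
      case 1
      then have "(b, alpha b) \<in> r" unfolding r_def using alpha_A by blast
      then show ?thesis using 1 by simp
    next
      case 2
      then have "(b, partner M S b) \<in> r" unfolding r_def using partner_in by blast
      then show ?thesis using 2 partner_partner[OF S] by simp
    qed
  qed
  moreover have "r `` L \<subseteq> L \<longleftrightarrow> (\<forall>x\<in>L. alpha x \<in> L \<and> partner M S x \<in> L)" if "L \<subseteq> ?A" for L
    using that unfolding r_def by blast
  then have "{L. L \<subseteq> ?A \<and> r `` L \<subseteq> L} = curve_unions M S"
    unfolding curve_unions_def by blast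
  ultimately show ?thesis
    using card_closed_subsets_rtrancl[of ?A r] finite_darts unfolding num_curves_def r_def by simp
qed

end

text \<open>The colour-1 classes L completing the colour-0 class M to a Tait coloring.\<close>

definition tait_completions :: "'d set \<Rightarrow> 'd set set" where
  "tait_completions M = {L. L \<subseteq> D - M \<and> (\<forall>x\<in>L. alpha x \<in> L) \<and>
     (\<forall>d\<in>M. (sigma d \<in> L) \<noteq> (sigma (sigma d) \<in> L))}"

text \<open>The state in which every resolution arc joins two ends of the same colour.\<close>

definition state_of :: "'d set \<Rightarrow> 'd set \<Rightarrow> 'd set" where
  "state_of M L = {d \<in> M. (sigma d \<in> L) = (sigma (alpha d) \<in> L)}"

definition monochromatic_at :: "'d set \<Rightarrow> 'd \<Rightarrow> bool" where
  "monochromatic_at L d \<longleftrightarrow> (sigma d \<in> L) = (sigma (sigma d) \<in> L) \<and>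
     (sigma d \<in> L) = (sigma (alpha d) \<in> L) \<and> (sigma d \<in> L) = (sigma (sigma (alpha d)) \<in> L)"

lemma finite_tait_completions: "finite (tait_completions M)"
proof -
  have "tait_completions M \<subseteq> Pow D" unfolding tait_completions_def by blast
  then show ?thesis using finite_darts by (simp add: finite_subset)
qed

context
  fixes M assumes M: "M \<in> matchings"
begin

lemma tait_completionD:
  assumes "L \<in> tait_completions M"
  shows "L \<subseteq> D - M" "L \<in> edge_sets" "\<And>d. d \<in> M \<Longrightarrow> (sigma d \<in> L) \<noteq> (sigma (sigma d) \<in> L)"
  using assms unfolding tait_completions_def edge_sets_def by auto

lemma curve_union_partner_iff:
  assumes S: "S \<in> states M" and L: "L \<in> curve_unions M S" and x: "x \<in> D" "x \<notin> M"
  shows "partner M S x \<in> L \<longleftrightarrow> x \<in> L"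
proof
  assume "partner M S x \<in> L"
  then have "partner M S (partner M S x) \<in> L" using L unfolding curve_unions_def by blast
  then show "x \<in> L" using partner_partner[OF M S x] by simp
qed (use L in \<open>auto simp: curve_unions_def\<close>)

lemma monochromatic_if_not_completion:
  assumes S: "S \<in> states M" and L: "L \<in> curve_unions M S" and not: "L \<notin> tait_completions M"
  obtains d where "d \<in> M" "monochromatic_at L d"
proof -
  have "L \<subseteq> D - M" "\<forall>x\<in>L. alpha x \<in> L" using L unfolding curve_unions_def by auto
  then obtain d where d: "d \<in> M" "(sigma d \<in> L) = (sigma (sigma d) \<in> L)"
    using not unfolding tait_completions_def by blast
  have "monochromatic_at L d"
    unfolding monochromatic_at_def
    using d matching_dartD[OF M d(1)]
      curve_union_partner_iff[OF S L, of "sigma d"] curve_union_partner_iff[OF S L, of "sigma (sigma d)"]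
    by (cases "d \<in> S") (simp_all add: partner_sigma[OF M] partner_sigma_sigma[OF M])
  then show thesis using that d(1) by blast
qed

lemma state_of_in_states: "state_of M L \<in> states M"
  unfolding states_def state_of_def using matching_dartD[OF M] by auto

lemma compatible_states_completion:
  assumes L: "L \<in> tait_completions M"
  shows "{S \<in> states M. L \<in> curve_unions M S} = {state_of M L}"
proof -
  have LM: "L \<subseteq> D - M" "\<forall>x\<in>L. alpha x \<in> L" "\<forall>d\<in>M. (sigma d \<in> L) \<noteq> (sigma (sigma d) \<in> L)"
    using L unfolding tait_completions_def by auto
  have "partner M (state_of M L) x \<in> L" if x: "x \<in> L" for x
  proof -
    have "x \<in> D" "x \<notin> M" using x LM(1) by auto
    from non_matching_cases[OF M this] show ?thesis
    proof cases
      case (1 d)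
      then show ?thesis using x LM(3) matching_dartD(2)[OF M 1(1)]
        by (cases "sigma (alpha d) \<in> L") (auto simp: partner_sigma[OF M] state_of_def)
    next
      case (2 d)
      then show ?thesis using x LM(3) matching_dartD(2)[OF M 2(1)]
        by (cases "sigma (alpha d) \<in> L") (auto simp: partner_sigma_sigma[OF M] state_of_def)
    qed
  qed
  then have "L \<in> curve_unions M (state_of M L)" unfolding curve_unions_def using LM by blast
  moreover have "S = state_of M L" if S: "S \<in> states M" and LS: "L \<in> curve_unions M S" for S
  proof -
    have "d \<in> S \<longleftrightarrow> d \<in> state_of M L" if d: "d \<in> M" for d
      using curve_union_partner_iff[OF S LS, of "sigma d"] matching_dartD[OF M d] d LM(3)
      by (cases "d \<in> S") (auto simp: partner_sigma[OF M] state_of_def)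
    then show ?thesis using S unfolding states_def state_of_def by blast
  qed
  ultimately show ?thesis using state_of_in_states by blast
qed

lemma sign_toggle:
  assumes S: "S \<in> states M" and d: "d \<in> M"
  shows "(-1::real) ^ (card (sym_diff S {d, alpha d}) div 2) = - ((-1) ^ (card S div 2))"
proof -
  have SM: "S \<subseteq> M" using S unfolding states_def by blast
  have finS: "finite S" using finite_subset[OF SM] finite_subset[OF matching_subset[OF M] finite_darts] by blast
  have two: "card {d, alpha d} = 2" using alpha_neq[OF matching_dartD(1)[OF M d]] by simp
  consider "{d, alpha d} \<subseteq> S" | "S \<inter> {d, alpha d} = {}"
    using state_alpha_iff[OF M S d] by blast
  then have "card (sym_diff S {d, alpha d}) + 2 = card S \<or> card (sym_diff S {d, alpha d}) = card S + 2"
  proof cases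
    case 1
    then have "sym_diff S {d, alpha d} = S - {d, alpha d}" by blast
    then show ?thesis using 1 two card_Diff_subset[OF _ 1] card_mono[OF finS 1] by simp arith
  next
    case 2
    then have "sym_diff S {d, alpha d} = S \<union> {d, alpha d}" by blast
    then show ?thesis using 2 two card_Un_disjoint[OF finS _ 2] by simp
  qed
  moreover have flip: "(-1::real) ^ ((n + 2) div 2) = - ((-1) ^ (n div 2))" for n :: nat
    by simp
  ultimately show ?thesis by (metis minus_minus)
qed

lemma toggle_in_states:
  assumes S: "S \<in> states M" and d: "d \<in> M"
  shows "sym_diff S {d, alpha d} \<in> states M"
proof -
  have dD: "d \<in> D" and ad: "alpha d \<in> M" using matching_dartD[OF M d] by auto
  have "alpha x \<in> sym_diff S {d, alpha d}" if "x \<in> sym_diff S {d, alpha d}" for x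
    using that state_alpha_iff[OF M S] alpha_alpha[OF dD] matching_dartD(1)[OF M] S
    unfolding states_def by (auto dest: alpha_inj[OF _ dD] alpha_inj[OF _ alpha_in[OF dD]])
  then show ?thesis using S d ad unfolding states_def by auto
qed

lemma curve_union_toggle:
  assumes S: "S \<in> states M" and L: "L \<in> curve_unions M S"
    and d: "d \<in> M" and mono: "monochromatic_at L d"
  shows "L \<in> curve_unions M (sym_diff S {d, alpha d})"
proof -
  let ?T = "sym_diff S {d, alpha d}"
  let ?ends = "{sigma d, sigma (sigma d), sigma (alpha d), sigma (sigma (alpha d))}"
  have dD: "d \<in> D" using matching_dartD[OF M d] by auto
  have ends: "?ends \<subseteq> L" if "y \<in> ?ends" "y \<in> L" for y
    using mono that unfolding monochromatic_at_def by auto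
  have "partner M ?T x \<in> L" if x: "x \<in> L" for x
  proof -
    have LM: "x \<in> D" "x \<notin> M" using x L unfolding curve_unions_def by auto
    have old: "partner M S x \<in> L" using x L unfolding curve_unions_def by blast
    from non_matching_cases[OF M LM] show ?thesis
    proof cases
      case (1 e)
      then show ?thesis
      proof (cases "e \<in> {d, alpha d}")
        case True
        then have "x \<in> ?ends" "partner M ?T x \<in> ?ends"
          using 1 dD by (auto simp: partner_sigma[OF M])
        then show ?thesis using ends x by blast
      qed (use old in \<open>simp add: partner_sigma[OF M]\<close>)
    next
      case (2 e)
      then show ?thesis
      proof (cases "e \<in> {d, alpha d}")
        case True
        then have "x \<in> ?ends" "partner M ?T x \<in> ?ends"
          using 2 dD by (auto simp: partner_sigma_sigma[OF M])
        then show ?thesis using ends x by blast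
      qed (use old in \<open>simp add: partner_sigma_sigma[OF M]\<close>)
    qed
  qed
  then show ?thesis using L unfolding curve_unions_def by blast
qed

lemma sum_signs_monochromatic:
  assumes d: "d \<in> M" and mono: "monochromatic_at L d"
  shows "(\<Sum>S\<in>{S \<in> states M. L \<in> curve_unions M S}. (-1::real) ^ (card S div 2)) = 0"
proof (rule sum_involution_eq_0[where h = "\<lambda>S. sym_diff S {d, alpha d}"])
  fix S assume "S \<in> {S \<in> states M. L \<in> curve_unions M S}"
  then have S: "S \<in> states M" and L: "L \<in> curve_unions M S" by auto
  show "sym_diff S {d, alpha d} \<in> {S \<in> states M. L \<in> curve_unions M S}"
    using toggle_in_states[OF S d] curve_union_toggle[OF S L d mono] by blast
  show "sym_diff (sym_diff S {d, alpha d}) {d, alpha d} = S" by blast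
  show "sym_diff S {d, alpha d} \<noteq> S" by blast
  show "(-1) ^ (card (sym_diff S {d, alpha d}) div 2) + (-1::real) ^ (card S div 2) = 0"
    using sign_toggle[OF S d] by simp
qed

lemma sum_signs_compatible:
  "(\<Sum>S\<in>{S \<in> states M. L \<in> curve_unions M S}. (-1::real) ^ (card S div 2)) =
    (if L \<in> tait_completions M then (-1) ^ (card (state_of M L) div 2) else 0)"
proof (cases "L \<in> tait_completions M")
  case True
  then show ?thesis by (simp add: compatible_states_completion)
next
  case not_completion: False
  show ?thesis
  proof (cases "{S \<in> states M. L \<in> curve_unions M S} = {}")
    case True
    then show ?thesis using not_completion by (simp only: sum.empty if_False)
  next
    case False
    then obtain S where "S \<in> states M" "L \<in> curve_unions M S" by blast
    then obtain d where "d \<in> M" "monochromatic_at L d"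
      using monochromatic_if_not_completion not_completion by blast
    then show ?thesis using sum_signs_monochromatic not_completion by simp
  qed
qed

lemma two_factor_poly_one:
  "two_factor_poly D alpha sigma M 1 = (\<Sum>L\<in>tait_completions M. (-1) ^ (card (state_of M L) div 2))"
proof -
  let ?f = "\<lambda>S. (-1::real) ^ (card S div 2)" and ?Ls = "Pow (D - M)"
  have fin: "finite ?Ls" using finite_darts by simp
  have "two_factor_poly D alpha sigma M 1 = (\<Sum>S\<in>states M. ?f S * 2 ^ num_curves D alpha sigma M S)"
    unfolding two_factor_poly_def states_def by simp
  also have "\<dots> = (\<Sum>S\<in>states M. \<Sum>L\<in>{L \<in> ?Ls. L \<in> curve_unions M S}. ?f S)"
  proof (rule sum.cong[OF refl])
    fix S assume "S \<in> states M"
    moreover have "{L \<in> ?Ls. L \<in> curve_unions M S} = curve_unions M S"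
      unfolding curve_unions_def by blast
    ultimately show "?f S * 2 ^ num_curves D alpha sigma M S = (\<Sum>L\<in>{L \<in> ?Ls. L \<in> curve_unions M S}. ?f S)"
      by (simp add: card_curve_unions[OF M, symmetric])
  qed
  also have "\<dots> = (\<Sum>L\<in>?Ls. \<Sum>S\<in>{S \<in> states M. L \<in> curve_unions M S}. ?f S)"
    by (rule sum.swap_restrict[OF finite_states[OF M] fin])
  also have "\<dots> = (\<Sum>L\<in>?Ls. if L \<in> tait_completions M then ?f (state_of M L) else 0)"
    by (simp add: sum_signs_compatible)
  also have "\<dots> = (\<Sum>L\<in>?Ls \<inter> tait_completions M. ?f (state_of M L))"
    by (rule sum.inter_restrict[OF fin, symmetric])
  also have "?Ls \<inter> tait_completions M = tait_completions M"
    unfolding tait_completions_def by blast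
  finally show ?thesis .
qed

lemma matching_union_completion_in_cycle_space:
  assumes L: "L \<in> tait_completions M"
  shows "M \<union> L \<in> cycle_space"
proof -
  note LM = tait_completionD[OF L]
  have "M \<union> L \<in> edge_sets"
    using matching_in_edge_sets[OF M] LM(2) unfolding edge_sets_def by auto
  moreover have "card (vertex x \<inter> (M \<union> L)) = 2" if x: "x \<in> D" for x
  proof -
    have one: "of_bool (x \<in> M) + of_bool (sigma x \<in> M) + of_bool (sigma (sigma x) \<in> M) = (1::nat)"
      using matching_at_vertex[OF M x] .
    have "(sigma x \<in> L) \<noteq> (sigma (sigma x) \<in> L)" if "x \<in> M" using LM(3)[OF that] .
    moreover have "(sigma (sigma x) \<in> L) \<noteq> (x \<in> L)" if "sigma x \<in> M"
      using LM(3)[OF that] x by simp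
    moreover have "(x \<in> L) \<noteq> (sigma x \<in> L)" if "sigma (sigma x) \<in> M"
      using LM(3)[OF that] x by simp
    moreover have "y \<notin> L" if "y \<in> M" for y using that LM(1) by blast
    ultimately show ?thesis
      unfolding card_vertex_Int[OF x] using one
      by (cases "x \<in> M"; cases "sigma x \<in> M"; cases "sigma (sigma x) \<in> M") auto
  qed
  ultimately show ?thesis unfolding cycle_space_def odd_vertices_def by auto
qed

lemma card_completion:
  assumes L: "L \<in> tait_completions M"
  shows "card L = card M"
proof -
  note LM = tait_completionD[OF L]
  define h where "h d = (if sigma d \<in> L then sigma d else sigma (sigma d))" for d
  have "bij_betw h M L"
  proof (rule bij_betw_imageI)
    show "inj_on h M"
    proof (rule inj_onI)
      fix d d' assume "d \<in> M" "d' \<in> M" "h d = h d'"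
      then show "d = d'"
        unfolding h_def using matching_dartD[OF M] matching_sigma_notin[OF M]
        by (auto split: if_splits) (metis sigma_sigma_sigma)+
    qed
    show "h ` M = L"
    proof
      show "h ` M \<subseteq> L" unfolding h_def using LM(3) by auto
      show "L \<subseteq> h ` M"
      proof
        fix x assume x: "x \<in> L"
        have "x \<in> D" "x \<notin> M" using x LM(1) by auto
        from non_matching_cases[OF M this] show "x \<in> h ` M"
        proof cases
          case (1 d)
          then show ?thesis unfolding h_def using x by force
        next
          case (2 d)
          then have "h d = x" unfolding h_def using x LM(3)[OF 2(1)] by auto
          then show ?thesis using 2(1) by blast
        qed
      qed
    qed
  qed
  then show ?thesis by (simp add: bij_betw_same_card)
qed

lemma card_state_of_complement:
  "card (M - state_of M L) = 2 * card {d \<in> M - state_of M L. sigma d \<in> L}"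
proof -
  let ?N = "M - state_of M L"
  let ?B = "{d \<in> ?N. sigma d \<in> L}"
  have N: "d \<in> ?N \<longleftrightarrow> d \<in> M \<and> (sigma d \<in> L) \<noteq> (sigma (alpha d) \<in> L)" for d
    unfolding state_of_def by blast
  have alpha_N: "alpha d \<in> ?N" if d: "d \<in> ?N" for d
  proof -
    have "d \<in> M" "(sigma d \<in> L) \<noteq> (sigma (alpha d) \<in> L)" using d N by blast+
    then show ?thesis unfolding N using matching_dartD(1,2)[OF M \<open>d \<in> M\<close>] by auto
  qed
  have N_eq: "?N = ?B \<union> alpha ` ?B"
  proof
    show "?N \<subseteq> ?B \<union> alpha ` ?B"
    proof
      fix d assume d: "d \<in> ?N"
      show "d \<in> ?B \<union> alpha ` ?B"
      proof (cases "sigma d \<in> L")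
        case False
        have "d \<in> M" using d by blast
        then have "alpha d \<in> ?B" "d = alpha (alpha d)"
          using d False alpha_N[OF d] N matching_dartD(1)[OF M] by auto
        then show ?thesis by blast
      qed (use d in blast)
    qed
    show "?B \<union> alpha ` ?B \<subseteq> ?N" using alpha_N by blast
  qed
  have disjoint: "?B \<inter> alpha ` ?B = {}"
  proof (rule ccontr)
    assume "?B \<inter> alpha ` ?B \<noteq> {}"
    then obtain d d' where "d \<in> ?B" "d' \<in> ?B" "d = alpha d'" by blast
    moreover have "alpha d = d'" using \<open>d' \<in> ?B\<close> \<open>d = alpha d'\<close> matching_dartD(1)[OF M] by auto
    ultimately show False using N by blast
  qed
  have "?B \<subseteq> D" using matching_subset[OF M] by blast
  then have fin: "finite ?B" and card_alpha: "card (alpha ` ?B) = card ?B"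
    using finite_subset[OF _ finite_darts] card_image[OF inj_on_subset[OF inj_on_alpha]] by auto
  have "card ?N = card (?B \<union> alpha ` ?B)" using N_eq by (rule arg_cong)
  also have "\<dots> = card ?B + card (alpha ` ?B)"
    using fin disjoint by (intro card_Un_disjoint) auto
  finally show ?thesis using card_alpha by simp
qed

lemma even_card_state_of_part: "even (card {d \<in> state_of M L. sigma d \<in> L})"
proof (rule even_card_edge_set)
  let ?A = "{d \<in> state_of M L. sigma d \<in> L}"
  have "alpha d \<in> ?A" if d: "d \<in> ?A" for d
  proof -
    have "d \<in> M" "(sigma d \<in> L) = (sigma (alpha d) \<in> L)" "sigma d \<in> L"
      using d unfolding state_of_def by auto
    then show ?thesis using matching_dartD(1,2)[OF M \<open>d \<in> M\<close>] unfolding state_of_def by auto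
  qed
  moreover have "?A \<subseteq> D" using matching_subset[OF M] unfolding state_of_def by blast
  ultimately show "?A \<in> edge_sets" unfolding edge_sets_def by blast
qed

lemma matching_marker:
  assumes y: "y \<in> D"
  defines "P \<equiv> {x \<in> D. x \<in> M \<or> sigma (sigma x) \<in> M}"
  shows "(y \<in> P \<longleftrightarrow> sigma y \<in> P) \<longleftrightarrow> y \<notin> D - M"
  using matching_at_vertex[OF M y] y sigma_in[OF y] unfolding P_def
  by (cases "y \<in> M"; cases "sigma y \<in> M"; cases "sigma (sigma y) \<in> M") auto

lemma card_completion_sigma:
  assumes L: "L \<in> tait_completions M"
  shows "card {x \<in> L. sigma (sigma x) \<in> M} = card {d \<in> M. sigma d \<in> L}"
proof -
  have "{x \<in> L. sigma (sigma x) \<in> M} = sigma ` {d \<in> M. sigma d \<in> L}"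
  proof
    show "{x \<in> L. sigma (sigma x) \<in> M} \<subseteq> sigma ` {d \<in> M. sigma d \<in> L}"
    proof
      fix x assume x: "x \<in> {x \<in> L. sigma (sigma x) \<in> M}"
      then have "sigma (sigma (sigma x)) = x" using tait_completionD(1)[OF L] by auto
      then show "x \<in> sigma ` {d \<in> M. sigma d \<in> L}"
        using x by (intro image_eqI[where x = "sigma (sigma x)"]) simp_all
    qed
    show "sigma ` {d \<in> M. sigma d \<in> L} \<subseteq> {x \<in> L. sigma (sigma x) \<in> M}"
      using matching_dartD(1)[OF M] by auto
  qed
  moreover have "inj_on sigma {d \<in> M. sigma d \<in> L}"
    by (rule inj_on_subset[OF inj_on_sigma]) (use matching_subset[OF M] in blast)
  ultimately show ?thesis by (simp add: card_image)
qed

end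

definition tait_coloring_of :: "'d set \<times> 'd set \<Rightarrow> 'd \<Rightarrow> nat" where
  "tait_coloring_of = (\<lambda>(M, L) x. if x \<notin> D \<or> x \<in> M then 0 else if x \<in> L then 1 else 2)"

definition color_classes :: "('d \<Rightarrow> nat) \<Rightarrow> 'd set \<times> 'd set" where
  "color_classes c = ({x \<in> D. c x = 0}, {x \<in> D. c x = 1})"

lemma tait_coloring_at_vertex:
  assumes c: "c \<in> tait_colorings D alpha sigma" and x: "x \<in> D"
  shows "c x < 3" "c (sigma x) < 3" "c (sigma (sigma x)) < 3" "c (alpha x) = c x"
    "c (sigma x) \<noteq> c x" "c (sigma (sigma x)) \<noteq> c (sigma x)" "c (sigma (sigma x)) \<noteq> c x"
proof -
  have c_def: "\<And>y. y \<in> D \<Longrightarrow> c y < 3 \<and> c (alpha y) = c y \<and> c (sigma y) \<noteq> c y"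
    using c unfolding tait_colorings_def by blast
  show "c x < 3" "c (alpha x) = c x" "c (sigma x) \<noteq> c x" using c_def[OF x] by auto
  show "c (sigma x) < 3" "c (sigma (sigma x)) \<noteq> c (sigma x)" using c_def[OF sigma_in[OF x]] by auto
  show "c (sigma (sigma x)) < 3" using c_def[OF sigma_in[OF sigma_in[OF x]]] by auto
  show "c (sigma (sigma x)) \<noteq> c x" using c_def[OF sigma_in[OF sigma_in[OF x]]] x by auto
qed

lemma color_classes_tait_coloring:
  assumes c: "c \<in> tait_colorings D alpha sigma"
  shows "color_classes c \<in> (SIGMA M:matchings. tait_completions M)"
proof -
  let ?M = "{x \<in> D. c x = 0}" and ?L = "{x \<in> D. c x = 1}"
  have "card ({x, sigma x, sigma (sigma x)} \<inter> ?M) = 1" if x: "x \<in> D" for x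
    using card_vertex_Int[OF x, of ?M] tait_coloring_at_vertex[OF c x] sigma_in[OF x] sigma_in[OF sigma_in[OF x]] x
    unfolding vertex_def by auto
  moreover have "alpha x \<in> ?M" if "x \<in> ?M" for x
    using that tait_coloring_at_vertex[OF c] alpha_in by auto
  ultimately have M: "?M \<in> matchings" unfolding matchings_def perfect_matching_def by blast
  have "(sigma d \<in> ?L) \<noteq> (sigma (sigma d) \<in> ?L)" if d: "d \<in> ?M" for d
  proof -
    have dD: "d \<in> D" and "c d = 0" using d by auto
    then show ?thesis
      using tait_coloring_at_vertex[OF c dD] sigma_in[OF dD] sigma_in[OF sigma_in[OF dD]] by auto
  qed
  moreover have "alpha x \<in> ?L" if "x \<in> ?L" for x
    using that tait_coloring_at_vertex[OF c] alpha_in by auto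
  ultimately have "?L \<in> tait_completions ?M" unfolding tait_completions_def by auto
  with M show ?thesis unfolding color_classes_def by simp
qed

lemma tait_coloring_of_in:
  assumes M: "M \<in> matchings" and L: "L \<in> tait_completions M"
  shows "tait_coloring_of (M, L) \<in> tait_colorings D alpha sigma"
proof -
  let ?c = "tait_coloring_of (M, L)"
  note LM = tait_completionD[OF M L]
  have c: "?c x = (if x \<in> M then 0 else if x \<in> L then 1 else 2)" if "x \<in> D" for x
    using that unfolding tait_coloring_of_def by simp
  have "?c x < 3 \<and> ?c (alpha x) = ?c x \<and> ?c (sigma x) \<noteq> ?c x" if x: "x \<in> D" for x
  proof (intro conjI)
    show "?c x < 3" using c[OF x] by simp
    show "?c (alpha x) = ?c x"
      using c[OF x] c[OF alpha_in[OF x]] x LM(2) edge_set_alpha_iff[OF _ x]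
        edge_set_alpha_iff[OF matching_in_edge_sets[OF M] x] by simp
    have "(sigma x \<in> L) \<noteq> (sigma (sigma x) \<in> L)" if "x \<in> M" using LM(3)[OF that] .
    moreover have "(x \<in> L) \<noteq> (sigma x \<in> L)" if "sigma (sigma x) \<in> M" using LM(3)[OF that] x by simp
    ultimately show "?c (sigma x) \<noteq> ?c x"
      using c[OF x] c[OF sigma_in[OF x]] matching_at_vertex[OF M x]
      by (cases "x \<in> M"; cases "sigma x \<in> M"; cases "sigma (sigma x) \<in> M") auto
  qed
  moreover have "?c x = 0" if "x \<notin> D" for x using that unfolding tait_coloring_of_def by simp
  ultimately show ?thesis unfolding tait_colorings_def by blast
qed

lemma bij_betw_tait_coloring_of:
  "bij_betw tait_coloring_of (SIGMA M:matchings. tait_completions M) (tait_colorings D alpha sigma)"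
proof (rule bij_betw_byWitness[where f' = color_classes])
  show "\<forall>p\<in>SIGMA M:matchings. tait_completions M. color_classes (tait_coloring_of p) = p"
  proof (clarify)
    fix M L assume M: "M \<in> matchings" and L: "L \<in> tait_completions M"
    then show "color_classes (tait_coloring_of (M, L)) = (M, L)"
      using tait_completionD(1)[OF M L] matching_subset[OF M]
      unfolding color_classes_def tait_coloring_of_def by auto
  qed
  show "\<forall>c\<in>tait_colorings D alpha sigma. tait_coloring_of (color_classes c) = c"
  proof
    fix c assume c: "c \<in> tait_colorings D alpha sigma"
    have "tait_coloring_of (color_classes c) x = c x" for x
      using c tait_coloring_at_vertex(1)[OF c, of x] unfolding tait_colorings_def
      by (cases "x \<in> D") (auto simp: tait_coloring_of_def color_classes_def)
    then show "tait_coloring_of (color_classes c) = c" ..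
  qed
  show "tait_coloring_of ` (SIGMA M:matchings. tait_completions M) \<subseteq> tait_colorings D alpha sigma"
    using tait_coloring_of_in by auto
  show "color_classes ` tait_colorings D alpha sigma \<subseteq> (SIGMA M:matchings. tait_completions M)"
    using color_classes_tait_coloring by blast
qed

end

section \<open>The signs are positive for planar maps\<close>

context planar_trivalent
begin

lemma completion_parity:
  assumes M: "M \<in> matchings" and L: "L \<in> tait_completions M"
  shows "even (card M + card {d \<in> M. sigma d \<in> L} + card L div 2)"
proof -
  define P where "P = {x \<in> D. x \<in> M \<or> sigma (sigma x) \<in> M}"
  note LM = tait_completionD[OF M L]
  have "alpha x \<in> D - M" if "x \<in> D - M" for x
    using that edge_set_alpha_iff[OF matching_in_edge_sets[OF M]] alpha_in by blast
  then have "D - M \<in> edge_sets" unfolding edge_sets_def by blast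
  from cycle_parity[OF matching_union_completion_in_cycle_space[OF M L] this matching_marker[OF M]]
  have "even (card ((M \<union> L) \<inter> P) + card ((M \<union> L) \<inter> (D - M)) div 2)"
    unfolding P_def .
  moreover have "(M \<union> L) \<inter> (D - M) = L" using LM(1) by blast
  moreover have "card ((M \<union> L) \<inter> P) = card M + card {x \<in> L. sigma (sigma x) \<in> M}"
  proof -
    have "(M \<union> L) \<inter> P = M \<union> {x \<in> L. sigma (sigma x) \<in> M}"
      using LM(1) matching_subset[OF M] unfolding P_def by blast
    moreover have "M \<inter> {x \<in> L. sigma (sigma x) \<in> M} = {}" using LM(1) by blast
    moreover have "finite M" "finite L"
      using finite_subset[OF _ finite_darts] matching_subset[OF M] LM(1) by auto
    ultimately show ?thesis by (simp add: card_Un_disjoint)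
  qed
  ultimately show ?thesis using card_completion_sigma[OF M L] by simp
qed

lemma even_half_card_state_of:
  assumes M: "M \<in> matchings" and L: "L \<in> tait_completions M"
  shows "even (card (state_of M L) div 2)"
proof -
  define S where "S = state_of M L"
  have finM: "finite M" using finite_subset[OF _ finite_darts] matching_subset[OF M] by auto
  have SM: "S \<subseteq> M" unfolding S_def state_of_def by blast
  have finS: "finite S" using finite_subset[OF SM finM] .
  have split_A: "card {d \<in> M. sigma d \<in> L} = card {d \<in> S. sigma d \<in> L} + card {d \<in> M - S. sigma d \<in> L}"
  proof -
    have "{d \<in> M. sigma d \<in> L} = {d \<in> S. sigma d \<in> L} \<union> {d \<in> M - S. sigma d \<in> L}"
      using SM by blast
    moreover have "card ({d \<in> S. sigma d \<in> L} \<union> {d \<in> M - S. sigma d \<in> L}) =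
        card {d \<in> S. sigma d \<in> L} + card {d \<in> M - S. sigma d \<in> L}"
      by (rule card_Un_disjoint) (use finS finM in auto)
    ultimately show ?thesis by simp
  qed
  have split_M: "card M = card S + card (M - S)"
    using card_Diff_subset[OF finS SM] card_mono[OF finM SM] by simp
  have "S \<subseteq> D" "\<forall>x\<in>S. alpha x \<in> S"
    using SM matching_subset[OF M] state_of_in_states[OF M] unfolding S_def states_def by auto
  then have "S \<in> edge_sets" unfolding edge_sets_def by blast
  then have even_S: "even (card S)" by (rule even_card_edge_set)
  have arith: "even (s div 2)"
    if h: "even (m + a + l div 2)" "l = m" "m = s + n" "a = p + q" "n = 2 * q" "even p" "even s"
    for m a l s n p q :: nat
  proof -
    obtain s' p' where "s = 2 * s'" "p = 2 * p'" using h(6,7) by (auto elim!: evenE)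
    then have "even (3 * s' + 4 * q + 2 * p')" using h(1-5) by (simp add: algebra_simps)
    then show ?thesis using \<open>s = 2 * s'\<close> by simp
  qed
  show ?thesis
    using arith[OF completion_parity[OF M L] card_completion[OF M L] split_M split_A
        card_state_of_complement[OF M, of L, folded S_def] even_card_state_of_part[OF M, of L, folded S_def]
        even_S]
    unfolding S_def .
qed

lemma two_factor_poly_one_eq_card:
  assumes "M \<in> matchings"
  shows "two_factor_poly D alpha sigma M 1 = card (tait_completions M)"
  using two_factor_poly_one[OF assms] even_half_card_state_of[OF assms] by simp

lemma T_poly_one_eq_card_tait_colorings: "T_poly D alpha sigma 1 = card (tait_colorings D alpha sigma)"
proof -
  have "T_poly D alpha sigma 1 = (\<Sum>M\<in>matchings. real (card (tait_completions M)))"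
    unfolding T_poly_def matchings_def[symmetric] by (simp add: two_factor_poly_one_eq_card)
  also have "\<dots> = card (SIGMA M:matchings. tait_completions M)"
    using finite_matchings finite_tait_completions by (simp add: card_SigmaI)
  also have "\<dots> = card (tait_colorings D alpha sigma)"
    using bij_betw_same_card[OF bij_betw_tait_coloring_of] by simp
  finally show ?thesis .
qed

end

theorem theorem1p6:
  fixes D :: "'d set" and alpha sigma :: "'d \<Rightarrow> 'd"
  assumes "trivalent_map D alpha sigma"
    and "connected_map D alpha sigma"
    and "planar_map D alpha sigma"
  shows "T_poly D alpha sigma 1 = real (card (tait_colorings D alpha sigma))"
proof -
  interpret planar_trivalent D alpha sigma
    using assms by unfold_locales
  show ?thesis by (rule T_poly_one_eq_card_tait_colorings)
qed

end
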